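(* If $V=\langle v_1,\dots,v_\ell\rangle$ is a sequence of moves that can be applied (successively) to the distribution $\mu$, then $M_2[V\mu]\le M_2[\bar V\mu]$, where $\bar V$ is the sequence of extreme moves on the same intervals.
   Context: A distribution is a finite set $\{(x_1,m_1),\dots,(x_k,m_k)\}$, $m_i>0$; $\mu(A)=\sum_{x_i\in A}m_i$; $M_j[\mu]=\sum_im_ix_i^j$. A move $v=([a,b],\delta)$ has $\delta$ a signed distribution on $[a,b]$ with $M_0[\delta]=M_1[\delta]=0$; it applies to $\mu$ if $\mu+\delta$ is a distribution, and $v\mu=\mu+\delta$; $V\mu$ is the result of applying the moves in order. The extreme move $\bar v$ on $[a,b]$ maps $\mu$ to the distribution $\mu'$ with $\mu'\{a<x<b\}=0$, $\mu'(\{x\})=\mu(\{x\})$ for $x\notin[a,b]$, $M_0[\mu']=M_0[\mu]$, $M_1[\mu']=M_1[\mu]$. *)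

theory Defs
  imports Main "HOL.Real"
begin

text \<open>A (signed) distribution is represented by its mass function real \<Rightarrow> real,
  with finite support: the pair (x_i, m_i) corresponds to mu x_i = m_i.\<close>

type_synonym distr = "real \<Rightarrow> real"

definition supp :: "distr \<Rightarrow> real set" where
  "supp \<mu> = {x. \<mu> x \<noteq> 0}"

definition is_distribution :: "distr \<Rightarrow> bool" where
  "is_distribution \<mu> \<longleftrightarrow> finite (supp \<mu>) \<and> (\<forall>x. 0 \<le> \<mu> x)"

definition mass :: "distr \<Rightarrow> real set \<Rightarrow> real" where
  "mass \<mu> A = (\<Sum>x\<in>supp \<mu> \<inter> A. \<mu> x)"

definition moment :: "nat \<Rightarrow> distr \<Rightarrow> real" where
  "moment j \<mu> = (\<Sum>x\<in>supp \<mu>. \<mu> x * x ^ j)"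

text \<open>A move ([a,b], delta) is represented as the triple (a, b, delta).\<close>

type_synonym move = "real \<times> real \<times> distr"

definition is_move :: "move \<Rightarrow> bool" where
  "is_move v \<longleftrightarrow> (case v of (a, b, \<delta>) \<Rightarrow>
      a \<le> b \<and> finite (supp \<delta>) \<and> supp \<delta> \<subseteq> {a..b}
      \<and> moment 0 \<delta> = 0 \<and> moment 1 \<delta> = 0)"

definition apply_move :: "move \<Rightarrow> distr \<Rightarrow> distr" where
  "apply_move v \<mu> = (case v of (a, b, \<delta>) \<Rightarrow> (\<lambda>x. \<mu> x + \<delta> x))"

definition move_applies :: "move \<Rightarrow> distr \<Rightarrow> bool" where
  "move_applies v \<mu> \<longleftrightarrow> is_distribution (apply_move v \<mu>)"

fun moves_apply :: "move list \<Rightarrow> distr \<Rightarrow> bool" where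
  "moves_apply [] \<mu> = True"
| "moves_apply (v # vs) \<mu> = (move_applies v \<mu> \<and> moves_apply vs (apply_move v \<mu>))"

fun apply_moves :: "move list \<Rightarrow> distr \<Rightarrow> distr" where
  "apply_moves [] \<mu> = \<mu>"
| "apply_moves (v # vs) \<mu> = apply_moves vs (apply_move v \<mu>)"

definition extreme_result :: "real \<Rightarrow> real \<Rightarrow> distr \<Rightarrow> distr \<Rightarrow> bool" where
  "extreme_result a b \<mu> \<mu>' \<longleftrightarrow>
     is_distribution \<mu>' \<and> mass \<mu>' {a<..<b} = 0
     \<and> (\<forall>x. x \<notin> {a..b} \<longrightarrow> \<mu>' x = \<mu> x)
     \<and> moment 0 \<mu>' = moment 0 \<mu> \<and> moment 1 \<mu>' = moment 1 \<mu>"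

definition extreme_move :: "real \<Rightarrow> real \<Rightarrow> distr \<Rightarrow> distr" where
  "extreme_move a b \<mu> = (THE \<mu>'. extreme_result a b \<mu> \<mu>')"

fun apply_extreme_moves :: "move list \<Rightarrow> distr \<Rightarrow> distr" where
  "apply_extreme_moves [] \<mu> = \<mu>"
| "apply_extreme_moves ((a, b, \<delta>) # vs) \<mu> = apply_extreme_moves vs (extreme_move a b \<mu>)"

end

theory Submission
  imports Defs "HOL-Analysis.Convex"
begin

(* Write  E[mu] f  for the integral of f against a finitely supported mass
   function, and say that mu is dominated by nu in the convex order if E[mu] f <= E[nu] f for
   every convex f : real => real.  Since x^2 is convex, the theorem follows once we show that
   V mu is dominated by Vbar mu.  This is proved by induction along the list of moves, from the
   one-step statement:

     if mu <= nu in the convex order, a move ([a,b], delta) applies to mu, and nu' is the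
     extreme move on [a,b] applied to nu, then mu + delta <= nu' in the convex order.

   For a convex f, let g = max f l, where l is the chord of f over [a,b].  Then g is convex,
   f <= g, g is affine on [a,b] and g = f off (a,b).  Signed masses on [a,b] with vanishing
   zeroth and first moments (delta and nu - nu') integrate affine functions to 0, hence
     E[mu+delta] f <= E[mu+delta] g = E[mu] g <= E[nu] g = E[nu'] g = E[nu'] f,
   the last step because nu' carries no mass in (a,b). *)


section \<open>Integration against finitely supported mass functions\<close>

definition expect :: "distr \<Rightarrow> (real \<Rightarrow> real) \<Rightarrow> real" where
  "expect \<mu> f = (\<Sum>x\<in>supp \<mu>. \<mu> x * f x)"

lemma moment_eq_expect: "moment j \<mu> = expect \<mu> (\<lambda>x. x ^ j)"
  by (simp add: moment_def expect_def)

lemma expect_eq_sum: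
  assumes "finite A" "supp \<mu> \<subseteq> A"
  shows "expect \<mu> f = (\<Sum>x\<in>A. \<mu> x * f x)"
  unfolding expect_def
  by (rule sum.mono_neutral_left) (use assms in \<open>auto simp: supp_def\<close>)

lemma finite_supp_add:
  assumes "finite (supp \<mu>)" "finite (supp \<nu>)"
  shows "finite (supp (\<lambda>x. \<mu> x + \<nu> x))"
  by (rule finite_subset[of _ "supp \<mu> \<union> supp \<nu>"]) (use assms in \<open>auto simp: supp_def\<close>)

lemma expect_add:
  assumes "finite (supp \<mu>)" "finite (supp \<nu>)"
  shows "expect (\<lambda>x. \<mu> x + \<nu> x) f = expect \<mu> f + expect \<nu> f"
proof -
  let ?A = "supp \<mu> \<union> supp \<nu>"
  have "supp (\<lambda>x. \<mu> x + \<nu> x) \<subseteq> ?A" by (auto simp: supp_def)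
  then show ?thesis
    using assms by (simp add: expect_eq_sum[of ?A] distrib_right sum.distrib)
qed

lemma expect_diff:
  assumes "finite (supp \<mu>)" "finite (supp \<nu>)"
  shows "expect (\<lambda>x. \<mu> x - \<nu> x) f = expect \<mu> f - expect \<nu> f"
proof -
  let ?A = "supp \<mu> \<union> supp \<nu>"
  have "supp (\<lambda>x. \<mu> x - \<nu> x) \<subseteq> ?A" by (auto simp: supp_def)
  then show ?thesis
    using assms by (simp add: expect_eq_sum[of ?A] left_diff_distrib sum_subtractf)
qed

lemma moment_diff:
  assumes "finite (supp \<mu>)" "finite (supp \<nu>)"
  shows "moment j (\<lambda>x. \<mu> x - \<nu> x) = moment j \<mu> - moment j \<nu>"
  using assms by (simp add: moment_eq_expect expect_diff)

lemma expect_point_mass: "expect (\<lambda>x. if x = c then p else 0) f = p * f c"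
  by (subst expect_eq_sum[of "{c}"]) (auto simp: supp_def)

lemma expect_cong_supp:
  assumes "\<And>x. x \<in> supp \<mu> \<Longrightarrow> f x = g x"
  shows "expect \<mu> f = expect \<mu> g"
  unfolding expect_def using assms by (intro sum.cong) auto

lemma expect_mono:
  assumes "is_distribution \<mu>" "\<And>x. x \<in> supp \<mu> \<Longrightarrow> f x \<le> g x"
  shows "expect \<mu> f \<le> expect \<mu> g"
  unfolding expect_def
  using assms by (intro sum_mono mult_left_mono) (auto simp: is_distribution_def)

lemma expect_affine_vanish:
  assumes "moment 0 h = 0" "moment 1 h = 0"
  shows "expect h (\<lambda>x. c + d * x) = 0"
proof -
  have "expect h (\<lambda>x. c + d * x) = c * moment 0 h + d * moment 1 h"
    by (simp add: moment_def expect_def sum_distrib_left sum.distrib algebra_simps)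
  then show ?thesis using assms by simp
qed

lemma expect_affine_on_vanish:
  assumes "supp h \<subseteq> {a..b}" "moment 0 h = 0" "moment 1 h = 0"
    and "\<And>x. x \<in> {a..b} \<Longrightarrow> g x = c + d * x"
  shows "expect h g = 0"
proof -
  have "expect h g = expect h (\<lambda>x. c + d * x)"
    using assms(1,4) by (intro expect_cong_supp) auto
  then show ?thesis using expect_affine_vanish[OF assms(2,3)] by simp
qed


section \<open>The extreme move is well defined\<close>

lemma mass_zero_vanish:
  assumes "is_distribution \<mu>" "mass \<mu> S = 0" "x \<in> S"
  shows "\<mu> x = 0"
proof (rule ccontr)
  assume "\<mu> x \<noteq> 0"
  then have x: "x \<in> supp \<mu> \<inter> S" using assms(3) by (simp add: supp_def)
  have "finite (supp \<mu> \<inter> S)" "\<forall>y\<in>supp \<mu> \<inter> S. 0 \<le> \<mu> y"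
    using assms(1) by (auto simp: is_distribution_def)
  then have "\<forall>y\<in>supp \<mu> \<inter> S. \<mu> y = 0"
    using assms(2) sum_nonneg_eq_0_iff unfolding mass_def by blast
  then show False using x by (auto simp: supp_def)
qed

lemma two_point_moments_vanish:
  assumes "supp h \<subseteq> {a, b}" "moment 0 h = 0" "moment 1 h = 0"
  shows "h x = 0"
proof -
  have mom: "moment j h = (if a = b then h a * a ^ j else h a * a ^ j + h b * b ^ j)" for j
    using assms(1) by (simp add: moment_eq_expect expect_eq_sum[of "{a, b}"])
  have "h a = 0 \<and> h b = 0"
  proof (cases "a = b")
    case True
    then show ?thesis using assms(2) mom[of 0] by simp
  next
    case False
    have "h a + h b = 0" "h a * a + h b * b = 0"
      using assms(2,3) mom[of 0] mom[of 1] False by simp_all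
    moreover have "h b * (b - a) = (h a * a + h b * b) - a * (h a + h b)"
      by (simp add: algebra_simps)
    ultimately have "h b * (b - a) = 0" by simp
    then show ?thesis using False \<open>h a + h b = 0\<close> by simp
  qed
  then show ?thesis using assms(1) by (cases "x \<in> {a, b}") (auto simp: supp_def)
qed

lemma extreme_result_unique:
  assumes r1: "extreme_result a b \<nu> \<mu>1" and r2: "extreme_result a b \<nu> \<mu>2"
  shows "\<mu>1 = \<mu>2"
proof -
  have d1: "is_distribution \<mu>1" and d2: "is_distribution \<mu>2"
    using r1 r2 by (auto simp: extreme_result_def)
  define h where "h = (\<lambda>x. \<mu>1 x - \<mu>2 x)"
  have "h x = 0" if "x \<notin> {a, b}" for x
  proof (cases "x \<in> {a<..<b}")
    case True
    then show ?thesis using r1 r2 mass_zero_vanish[OF d1 _ True] mass_zero_vanish[OF d2 _ True]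
      by (simp add: h_def extreme_result_def)
  next
    case False
    then show ?thesis using that r1 r2 by (auto simp: h_def extreme_result_def)
  qed
  then have supp_h: "supp h \<subseteq> {a, b}" by (auto simp: supp_def)
  have "moment 0 h = 0" "moment 1 h = 0"
    using r1 r2 d1 d2 unfolding h_def
    by (simp_all add: moment_diff extreme_result_def is_distribution_def)
  then have "h x = 0" for x by (rule two_point_moments_vanish[OF supp_h])
  then show ?thesis by (auto simp: h_def fun_eq_iff)
qed

text \<open>A nonnegative mass on \<open>[a,b]\<close> has its barycentre in \<open>[a,b]\<close>, so it can be replaced by
  nonnegative masses \<open>p\<close> at \<open>a\<close> and \<open>q\<close> at \<open>b\<close> with the same zeroth and first moments.\<close>

lemma endpoint_weights:
  assumes \<iota>: "is_distribution \<iota>" and supp: "supp \<iota> \<subseteq> {a..b}" and lt: "a < b"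
  obtains p q where "0 \<le> p" "0 \<le> q" "p + q = moment 0 \<iota>" "p * a + q * b = moment 1 \<iota>"
proof
  define m where "m = moment 0 \<iota>"
  define s where "s = moment 1 \<iota>"
  have const: "expect \<iota> (\<lambda>_. k) = k * m" for k
    unfolding m_def moment_def expect_def by (simp add: sum_distrib_left mult.commute)
  have "expect \<iota> (\<lambda>_. a) \<le> expect \<iota> (\<lambda>x. x)" "expect \<iota> (\<lambda>x. x) \<le> expect \<iota> (\<lambda>_. b)"
    using supp by (intro expect_mono[OF \<iota>]; auto)+
  then have "a * m \<le> s" and "s \<le> b * m"
    by (simp_all add: const s_def moment_eq_expect)
  then show "0 \<le> (b * m - s) / (b - a)" "0 \<le> (s - a * m) / (b - a)" using lt by simp_all
  have "(b * m - s) / (b - a) + (s - a * m) / (b - a) = (b * m - a * m) / (b - a)"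
    by (simp add: add_divide_distrib[symmetric])
  then show "(b * m - s) / (b - a) + (s - a * m) / (b - a) = moment 0 \<iota>"
    using lt by (simp add: m_def left_diff_distrib[symmetric])
  have "(b * m - s) / (b - a) * a + (s - a * m) / (b - a) * b
      = ((b * m - s) * a + (s - a * m) * b) / (b - a)"
    by (simp add: add_divide_distrib)
  also have "(b * m - s) * a + (s - a * m) * b = s * (b - a)" by (simp add: algebra_simps)
  finally show "(b * m - s) / (b - a) * a + (s - a * m) / (b - a) * b = moment 1 \<iota>"
    using lt by (simp add: s_def)
qed

text \<open>Existence: the mass in \<open>(a,b)\<close> is removed and redistributed to the endpoints.\<close>

lemma extreme_result_exists:
  assumes \<nu>: "is_distribution \<nu>" and ab: "a \<le> b"
  shows "\<exists>\<nu>'. extreme_result a b \<nu> \<nu>'"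
proof (cases "a = b")
  case True
  then show ?thesis using \<nu> unfolding extreme_result_def mass_def by auto
next
  case False
  then have lt: "a < b" using ab by simp
  have fin: "finite (supp \<nu>)" and nn: "\<And>x. 0 \<le> \<nu> x" using \<nu> by (auto simp: is_distribution_def)
  define inner where "inner x = (if x \<in> {a<..<b} then \<nu> x else 0)" for x
  define outer where "outer x = (if x \<in> {a<..<b} then 0 else \<nu> x)" for x
  have fin_inner: "finite (supp inner)" and fin_outer: "finite (supp outer)"
    using fin by (auto simp: inner_def outer_def supp_def elim: finite_subset[rotated])
  have "is_distribution inner" using fin_inner nn by (simp add: is_distribution_def inner_def)
  moreover have "supp inner \<subseteq> {a..b}" by (auto simp: inner_def supp_def)
  ultimately obtain p q where p: "0 \<le> p" and q: "0 \<le> q"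
    and pq: "p + q = moment 0 inner" "p * a + q * b = moment 1 inner"
    using endpoint_weights lt by blast
  define pa where "pa = (\<lambda>x. if x = a then p else 0)"
  define qb where "qb = (\<lambda>x. if x = b then q else 0)"
  define \<nu>' where "\<nu>' = (\<lambda>x. outer x + pa x + qb x)"
  have fin_pa: "finite (supp pa)" and fin_qb: "finite (supp qb)"
    by (auto simp: pa_def qb_def supp_def elim: finite_subset[rotated])
  have fin_\<nu>': "finite (supp \<nu>')"
    unfolding \<nu>'_def by (intro finite_supp_add fin_outer fin_pa fin_qb)
  have moment_\<nu>': "moment j \<nu>' = moment j outer + p * a ^ j + q * b ^ j" for j
  proof -
    have "moment j \<nu>' = expect outer (\<lambda>x. x ^ j) + expect pa (\<lambda>x. x ^ j) + expect qb (\<lambda>x. x ^ j)"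
      unfolding \<nu>'_def moment_eq_expect
      by (simp add: expect_add finite_supp_add fin_outer fin_pa fin_qb)
    then show ?thesis by (simp add: moment_eq_expect pa_def qb_def expect_point_mass)
  qed
  have split: "\<nu> = (\<lambda>x. outer x + inner x)" by (auto simp: inner_def outer_def)
  have moment_\<nu>: "moment j \<nu> = moment j outer + moment j inner" for j
    using fin_outer fin_inner by (subst split) (simp add: moment_eq_expect expect_add)
  have "is_distribution \<nu>'"
    using fin_\<nu>' nn p q by (simp add: is_distribution_def \<nu>'_def outer_def pa_def qb_def)
  moreover have "mass \<nu>' {a<..<b} = 0"
    unfolding mass_def by (rule sum.neutral) (auto simp: \<nu>'_def outer_def pa_def qb_def)
  moreover have "\<forall>x. x \<notin> {a..b} \<longrightarrow> \<nu>' x = \<nu> x"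
    using lt by (auto simp: \<nu>'_def outer_def pa_def qb_def)
  moreover have "moment 0 \<nu>' = moment 0 \<nu>" "moment 1 \<nu>' = moment 1 \<nu>"
    using moment_\<nu>' moment_\<nu> pq by simp_all
  ultimately show ?thesis unfolding extreme_result_def by blast
qed

lemma extreme_move_result:
  assumes "is_distribution \<nu>" "a \<le> b"
  shows "extreme_result a b \<nu> (extreme_move a b \<nu>)"
proof -
  obtain \<nu>' where r: "extreme_result a b \<nu> \<nu>'" using extreme_result_exists[OF assms] by blast
  show ?thesis
    unfolding extreme_move_def
    by (rule theI[where P = "extreme_result a b \<nu>", OF r]) (use extreme_result_unique r in blast)
qed


lemma extreme_result_outside:
  assumes r: "extreme_result a b \<nu> \<nu>'" and x: "x \<in> supp \<nu>'"
  shows "x \<notin> {a<..<b}"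
proof
  assume "x \<in> {a<..<b}"
  then have "\<nu>' x = 0" using r mass_zero_vanish by (auto simp: extreme_result_def)
  then show False using x by (simp add: supp_def)
qed

lemma extreme_result_expect_affine:
  assumes r: "extreme_result a b \<nu> \<nu>'" and fin: "finite (supp \<nu>)"
    and g: "\<And>x. x \<in> {a..b} \<Longrightarrow> g x = c + d * x"
  shows "expect \<nu>' g = expect \<nu> g"
proof -
  have fin': "finite (supp \<nu>')" using r by (simp add: extreme_result_def is_distribution_def)
  have "expect \<nu> g - expect \<nu>' g = expect (\<lambda>x. \<nu> x - \<nu>' x) g"
    using fin fin' by (simp add: expect_diff)
  also have "\<dots> = 0"
  proof (rule expect_affine_on_vanish[OF _ _ _ g])
    show "supp (\<lambda>x. \<nu> x - \<nu>' x) \<subseteq> {a..b}"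
      using r by (auto simp: supp_def extreme_result_def)
    show "moment 0 (\<lambda>x. \<nu> x - \<nu>' x) = 0" "moment 1 (\<lambda>x. \<nu> x - \<nu>' x) = 0"
      using r fin fin' by (simp_all add: moment_diff extreme_result_def)
  qed
  finally show ?thesis by simp
qed

section \<open>The convex chord majorant\<close>

lemma convex_on_max:
  fixes f g :: "'a::real_vector \<Rightarrow> real"
  assumes f: "convex_on S f" and g: "convex_on S g"
  shows "convex_on S (\<lambda>x. max (f x) (g x))"
proof (rule convex_onI)
  fix t :: real and x y
  assume t: "0 < t" "t < 1" and xy: "x \<in> S" "y \<in> S"
  let ?z = "(1 - t) *\<^sub>R x + t *\<^sub>R y"
  let ?M = "(1 - t) * max (f x) (g x) + t * max (f y) (g y)"
  have "f ?z \<le> (1 - t) * f x + t * f y" "g ?z \<le> (1 - t) * g x + t * g y"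
    using convex_onD[OF f] convex_onD[OF g] t xy by auto
  moreover have "(1 - t) * f x + t * f y \<le> ?M" "(1 - t) * g x + t * g y \<le> ?M"
    by (intro add_mono mult_left_mono; use t in auto)+
  ultimately show "max (f ?z) (g ?z) \<le> ?M" by simp
next
  show "convex S" using f by (rule convex_on_imp_convex)
qed

lemma convex_on_affine: "convex_on UNIV (\<lambda>x::real. c + d * x)"
  unfolding convex_on_def
proof (intro conjI ballI allI impI)
  fix x y u v :: real
  assume "u + v = 1"
  moreover have "u * (c + d * x) + v * (c + d * y) = (u + v) * c + d * (u * x + v * y)"
    by (simp add: algebra_simps)
  ultimately show "c + d * (u *\<^sub>R x + v *\<^sub>R y) \<le> u * (c + d * x) + v * (c + d * y)"
    by simp
qed simp

text \<open>Outside \<open>[a,b]\<close> a convex function lies above the line through its values at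
  \<open>a\<close> and \<open>b\<close> (by monotonicity of slopes).\<close>

lemma convex_above_chord_outside:
  fixes f :: "real \<Rightarrow> real"
  assumes f: "convex_on UNIV f" and lt: "a < b" and x: "x \<notin> {a..b}"
  shows "f a + (f b - f a) / (b - a) * (x - a) \<le> f x"
proof -
  have slope_sym: "(f u - f v) / (u - v) = (f v - f u) / (v - u)" for u v
    by (metis minus_diff_eq minus_divide_divide)
  define s where "s = (f b - f a) / (b - a)"
  have s_ba: "s * (b - a) = f b - f a" using lt by (simp add: s_def)
  show ?thesis
  proof (cases "x < a")
    case True
    have "(f b - f x) / (b - x) \<le> s"
      using convex_on_slope_le(2)[OF f _ _ True lt] by (simp add: s_def slope_sym)
    then have "s * (x - b) \<le> (f b - f x) / (b - x) * (x - b)"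
      using True lt by (intro mult_right_mono_neg) simp_all
    also have "\<dots> = f x - f b" using True lt by (simp add: divide_simps algebra_simps)
    finally have "s * (x - b) \<le> f x - f b" .
    moreover have "s * (x - a) = s * (x - b) + s * (b - a)" by (simp add: algebra_simps)
    ultimately show ?thesis using s_ba by (simp add: s_def[symmetric])
  next
    case False
    then have bx: "b < x" using x by auto
    have "s \<le> (f x - f a) / (x - a)"
      using convex_on_slope_le(1)[OF f _ _ lt bx] by (simp add: s_def slope_sym)
    then have "s * (x - a) \<le> (f x - f a) / (x - a) * (x - a)"
      using bx lt by (intro mult_right_mono) simp_all
    also have "\<dots> = f x - f a" using bx lt by simp
    finally show ?thesis by (simp add: s_def)
  qed
qed

lemma convex_chord_majorant:
  fixes f :: "real \<Rightarrow> real"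
  assumes f: "convex_on UNIV f" and ab: "a \<le> b"
  obtains g c d where "convex_on UNIV g" "\<And>x. f x \<le> g x"
    "\<And>x. x \<in> {a..b} \<Longrightarrow> g x = c + d * x" "\<And>x. x \<notin> {a<..<b} \<Longrightarrow> g x = f x"
proof (cases "a = b")
  case True
  then show ?thesis using f by (intro that[of f "f a" 0]) auto
next
  case False
  then have lt: "a < b" using ab by simp
  define d where "d = (f b - f a) / (b - a)"
  define c where "c = f a - d * a"
  have chord: "c + d * x = f a + (f b - f a) / (b - a) * (x - a)" for x
    by (simp add: c_def d_def[symmetric] algebra_simps)
  have below: "f x \<le> c + d * x" if "x \<in> {a..b}" for x
  proof -
    have "convex_on {a..b} f" using f by (rule convex_on_subset) auto
    from convex_onD_Icc'[OF this that] show ?thesis by (simp add: chord algebra_simps)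
  qed
  have above: "c + d * x \<le> f x" if "x \<notin> {a..b}" for x
    using convex_above_chord_outside[OF f lt that] by (simp add: chord)
  have ends: "c + d * a = f a" "c + d * b = f b"
    using chord[of a] chord[of b] lt by simp_all
  show ?thesis
  proof (rule that[of "\<lambda>x. max (f x) (c + d * x)" c d])
    show "convex_on UNIV (\<lambda>x. max (f x) (c + d * x))"
      using f convex_on_affine by (rule convex_on_max)
    show "max (f x) (c + d * x) = c + d * x" if "x \<in> {a..b}" for x
      using below[OF that] by (rule max_absorb2)
    show "max (f x) (c + d * x) = f x" if x: "x \<notin> {a<..<b}" for x
    proof (rule max_absorb1)
      show "c + d * x \<le> f x"
      proof (cases "x \<in> {a..b}")
        case True
        then have "x = a \<or> x = b" using x by auto
        then show ?thesis using ends by auto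
      qed (rule above)
    qed
  qed simp
qed


section \<open>Extreme moves dominate moves in the convex order\<close>

definition convex_dominated :: "distr \<Rightarrow> distr \<Rightarrow> bool" where
  "convex_dominated \<mu> \<nu> \<longleftrightarrow> (\<forall>f. convex_on UNIV f \<longrightarrow> expect \<mu> f \<le> expect \<nu> f)"

lemma convex_dominated_step:
  assumes \<mu>: "is_distribution \<mu>" and \<nu>: "is_distribution \<nu>"
    and mv: "is_move (a, b, \<delta>)" and app: "is_distribution (\<lambda>x. \<mu> x + \<delta> x)"
    and dom: "convex_dominated \<mu> \<nu>"
  shows "convex_dominated (\<lambda>x. \<mu> x + \<delta> x) (extreme_move a b \<nu>)"
  unfolding convex_dominated_def
proof (intro allI impI)
  fix f :: "real \<Rightarrow> real"
  assume f: "convex_on UNIV f"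
  have ab: "a \<le> b" and fin\<delta>: "finite (supp \<delta>)" and supp\<delta>: "supp \<delta> \<subseteq> {a..b}"
    and \<delta>0: "moment 0 \<delta> = 0" and \<delta>1: "moment 1 \<delta> = 0"
    using mv by (auto simp: is_move_def)
  have fin\<mu>: "finite (supp \<mu>)" and fin\<nu>: "finite (supp \<nu>)"
    using \<mu> \<nu> by (simp_all add: is_distribution_def)
  define \<nu>' where "\<nu>' = extreme_move a b \<nu>"
  have r: "extreme_result a b \<nu> \<nu>'" unfolding \<nu>'_def by (rule extreme_move_result[OF \<nu> ab])
  obtain g c d where g: "convex_on UNIV g" and fg: "\<And>x. f x \<le> g x"
    and g_affine: "\<And>x. x \<in> {a..b} \<Longrightarrow> g x = c + d * x"
    and g_eq: "\<And>x. x \<notin> {a<..<b} \<Longrightarrow> g x = f x"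
    using convex_chord_majorant[OF f ab] by blast
  have \<delta>g: "expect \<delta> g = 0"
    using supp\<delta> \<delta>0 \<delta>1 g_affine by (rule expect_affine_on_vanish)
  have "expect (\<lambda>x. \<mu> x + \<delta> x) f \<le> expect (\<lambda>x. \<mu> x + \<delta> x) g"
    using app fg by (rule expect_mono)
  also have "\<dots> = expect \<mu> g"
    using fin\<mu> fin\<delta> \<delta>g by (simp add: expect_add)
  also have "\<dots> \<le> expect \<nu> g"
    using dom g by (simp add: convex_dominated_def)
  also have "\<dots> = expect \<nu>' g"
    using extreme_result_expect_affine[OF r fin\<nu> g_affine] by simp
  also have "\<dots> = expect \<nu>' f"
    using extreme_result_outside[OF r] g_eq by (intro expect_cong_supp) blast
  finally show "expect (\<lambda>x. \<mu> x + \<delta> x) f \<le> expect \<nu>' f" .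
qed

lemma convex_dominated_moves:
  assumes "is_distribution \<mu>" "is_distribution \<nu>" "\<forall>v\<in>set V. is_move v"
    and "moves_apply V \<mu>" "convex_dominated \<mu> \<nu>"
  shows "convex_dominated (apply_moves V \<mu>) (apply_extreme_moves V \<nu>)"
  using assms
proof (induction V arbitrary: \<mu> \<nu>)
  case Nil
  then show ?case by simp
next
  case (Cons v V)
  obtain a b \<delta> where v: "v = (a, b, \<delta>)" by (cases v) auto
  have mv: "is_move (a, b, \<delta>)" using Cons.prems(3) v by simp
  then have ab: "a \<le> b" by (simp add: is_move_def)
  have app: "is_distribution (\<lambda>x. \<mu> x + \<delta> x)" and rest: "moves_apply V (\<lambda>x. \<mu> x + \<delta> x)"
    using Cons.prems(4) v by (simp_all add: move_applies_def apply_move_def)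
  have \<nu>': "is_distribution (extreme_move a b \<nu>)"
    using extreme_move_result[OF Cons.prems(2) ab] by (simp add: extreme_result_def)
  have "convex_dominated (\<lambda>x. \<mu> x + \<delta> x) (extreme_move a b \<nu>)"
    using Cons.prems(1,2) mv app Cons.prems(5) by (rule convex_dominated_step)
  then have "convex_dominated (apply_moves V (\<lambda>x. \<mu> x + \<delta> x))
      (apply_extreme_moves V (extreme_move a b \<nu>))"
    using Cons.IH[OF app \<nu>'] Cons.prems(3) rest by simp
  then show ?case by (simp add: v apply_move_def)
qed


theorem mainTheorem12:
  fixes \<mu> :: distr and V :: "move list"
  assumes "is_distribution \<mu>"
    and "\<forall>v\<in>set V. is_move v"
    and "moves_apply V \<mu>"
  shows "moment 2 (apply_moves V \<mu>) \<le> moment 2 (apply_extreme_moves V \<mu>)"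
proof -
  have "convex_dominated \<mu> \<mu>" by (simp add: convex_dominated_def)
  then have "convex_dominated (apply_moves V \<mu>) (apply_extreme_moves V \<mu>)"
    using assms by (intro convex_dominated_moves) auto
  then show ?thesis
    using convex_power2 by (simp add: convex_dominated_def moment_eq_expect)
qed

end
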